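(* Let $\rho:\mathbb{Z}\to[0,\infty)$ be a weight with finite moments, and let $f,g$ be polynomials with $\deg f\le2$, $\deg g\le1$, satisfying $f(x+1)\rho(x+1)-f(x)\rho(x)=g(x)\rho(x)$ for all $x\in\mathbb{Z}$, with $\rho(x)f(x)$ vanishing at the end points of the support of $\rho$. Let $\{p_n\}_{n\ge0}$ be the monic orthogonal polynomials for $\rho$, $\sum_{x}p_mp_n\rho=h_n\delta_{n,m}$, $h_n>0$, let $\mathcal{A}_{\rm l}=g(x)T+f(x)(\Delta+\nabla)$ and let $c_n:=-\sum_{x\in\mathbb{Z}}p_{n+1}(x)(\mathcal{A}_{\rm l}p_n)(x)\rho(x)$. Put $\omega(x)=f(x+1)\rho(x+1)$ and $\langle\phi,\psi\rangle_{s,\omega}=\sum_{x\in\mathbb{Z}}[\phi(x)\psi(x+1)-\phi(x+1)\psi(x)]\omega(x)$, and assume the Pfaffians $\tau_{2n}=\mathrm{Pf}[\langle x^i,x^j\rangle_{s,\omega}]_{i,j=0}^{2n-1}$ are nonzero for all $n\ge1$. Then the polynomials $$Q_{2n+1}(x)=p_{2n+1}(x),\qquad Q_{2n}(x)=\sum_{l=0}^{n}\Big(\prod_{j=l}^{n-1}\frac{c_{2j+1}}{c_{2j}}\Big)p_{2l}(x)$$ (which, when all $c_{2j+1}\neq0$, equals $\big(\prod_{j=0}^{n-1}\frac{c_{2j+1}}{c_{2j}}\big)\sum_{l=0}^{n}\prod_{j=0}^{l-1}\frac{c_{2j}}{c_{2j+1}}p_{2l}(x)$) are monic skew orthogonal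 polynomials for $\langle\cdot,\cdot\rangle_{s,\omega}$, i.e. $\langle Q_{2n},Q_{2m+1}\rangle_{s,\omega}=-\langle Q_{2m+1},Q_{2n}\rangle_{s,\omega}=u_n\delta_{n,m}$ and $\langle Q_{2m},Q_{2n}\rangle_{s,\omega}=\langle Q_{2m+1},Q_{2n+1}\rangle_{s,\omega}=0$, with normalisation $u_n=c_{2n}$.
   Context: $T\phi(x)=\phi(x+1)$, $\Delta\phi(x)=\phi(x+1)-\phi(x)$, $\nabla\phi(x)=\phi(x)-\phi(x-1)$. Skew orthogonal polynomials are monic, $\deg Q_k=k$, and are unique only up to $Q_{2m+1}\mapsto Q_{2m+1}+\gamma_{2m}Q_{2m}$. It is a fact (from the paper) that $\mathcal{A}_{\rm l}p_n=-\frac{c_n}{h_{n+1}}p_{n+1}+\frac{c_{n-1}}{h_{n-1}}p_{n-1}$. *)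

theory Defs
  imports "HOL-Analysis.Analysis" "HOL-Computational_Algebra.Polynomial"
begin

definition A_low :: "real poly \<Rightarrow> real poly \<Rightarrow> (real \<Rightarrow> real) \<Rightarrow> real \<Rightarrow> real" where
  "A_low f g phi x = poly g x * phi (x + 1)
      + poly f x * ((phi (x + 1) - phi x) + (phi x - phi (x - 1)))"

definition c_coef :: "(int \<Rightarrow> real) \<Rightarrow> real poly \<Rightarrow> real poly \<Rightarrow> (nat \<Rightarrow> real poly) \<Rightarrow> nat \<Rightarrow> real" where
  "c_coef \<rho> f g p n =
     - (\<Sum>\<^sub>\<infinity>x::int. poly (p (Suc n)) (of_int x) * A_low f g (poly (p n)) (of_int x) * \<rho> x)"

definition skew_ip :: "(int \<Rightarrow> real) \<Rightarrow> real poly \<Rightarrow> real poly \<Rightarrow> real poly \<Rightarrow> real" where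
  "skew_ip \<rho> f \<phi> \<psi> =
     (\<Sum>\<^sub>\<infinity>x::int. (poly \<phi> (of_int x) * poly \<psi> (of_int x + 1)
                  - poly \<phi> (of_int x + 1) * poly \<psi> (of_int x))
                 * (poly f (of_int x + 1) * \<rho> (x + 1)))"

definition pfaffian :: "nat \<Rightarrow> (nat \<Rightarrow> nat \<Rightarrow> real) \<Rightarrow> real" where
  "pfaffian n A =
     (\<Sum>\<sigma> | \<sigma> permutes {0..<2*n}. of_int (sign \<sigma>) * (\<Prod>i<n. A (\<sigma> (2*i)) (\<sigma> (2*i+1))))
       / (2 ^ n * fact n)"

definition Q_skew :: "(nat \<Rightarrow> real poly) \<Rightarrow> (nat \<Rightarrow> real) \<Rightarrow> nat \<Rightarrow> real poly" where
  "Q_skew p c k =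
     (if odd k then p k
      else (\<Sum>l\<in>{0..k div 2}. smult (\<Prod>j\<in>{l..<k div 2}. c (2*j+1) / c (2*j)) (p (2*l))))"

end

theory Submission
  imports Defs
begin

text \<open>By Pearson's equation the weight \<open>\<omega>(x) = f(x+1) \<rho>(x+1)\<close> equals \<open>(f + g)(x) \<rho>(x)\<close>,
  so summation by parts turns the skew product into \<open>\<langle>\<phi>, \<psi>\<rangle> = \<Sum>\<^sub>x \<phi>(x) (A\<^sub>l \<psi>)(x) \<rho>(x)\<close>,
  where \<open>A\<^sub>l\<close> raises degrees by at most one. Hence in the basis \<open>p\<^sub>n\<close> the skew form is
  tridiagonal with \<open>\<langle>p\<^sub>n, p\<^sub>n\<^sub>+\<^sub>1\<rangle> = c\<^sub>n\<close>; in particular it vanishes between polynomials of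
  equal parity, and the coefficients of \<open>Q\<^sub>2\<^sub>n\<close> make its pairings with \<open>p\<^sub>2\<^sub>m\<^sub>+\<^sub>1\<close>, \<open>m < n\<close>,
  telescope to zero. They are well defined because \<open>c\<^sub>2\<^sub>m \<noteq> 0\<close>: otherwise \<open>Q\<^sub>2\<^sub>m\<close> would lie in
  the radical of the skew form and the Pfaffian \<open>\<tau>\<^sub>2\<^sub>m\<^sub>+\<^sub>2\<close> would vanish.
  The finite moments make all sums absolutely convergent.\<close>

definition poly_linear :: "(real poly \<Rightarrow> real) \<Rightarrow> bool" where
  "poly_linear L \<longleftrightarrow> (\<forall>a b. L (a + b) = L a + L b) \<and> (\<forall>c a. L (smult c a) = c * L a)"

lemma poly_linear_sum:
  assumes "poly_linear L" "finite I"
  shows "L (\<Sum>i\<in>I. smult (a i) (u i)) = (\<Sum>i\<in>I. a i * L (u i))"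
  using assms(2)
proof (induction I rule: finite_induct)
  case empty
  have "L (smult 0 0) = 0 * L 0" using assms(1) unfolding poly_linear_def by blast
  then show ?case by simp
next
  case (insert j I)
  then show ?case using assms(1) unfolding poly_linear_def by simp
qed

lemma poly_linear_sum_fun:
  "finite S \<Longrightarrow> (\<And>s. s \<in> S \<Longrightarrow> poly_linear (L s)) \<Longrightarrow> poly_linear (\<lambda>w. \<Sum>s\<in>S. L s w)"
  unfolding poly_linear_def by (simp add: sum.distrib sum_distrib_left)

lemma poly_linear_cmult: "poly_linear L \<Longrightarrow> poly_linear (\<lambda>w. c * L w)"
  unfolding poly_linear_def by (simp add: algebra_simps)

lemma poly_linear_mult_const: "poly_linear L \<Longrightarrow> poly_linear (\<lambda>w. L w * c)"
  unfolding poly_linear_def by (simp add: algebra_simps)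

lemma poly_linear_cong: "poly_linear L \<Longrightarrow> (\<And>w. L' w = L w) \<Longrightarrow> poly_linear L'"
  unfolding poly_linear_def by simp

lemma poly_linear_eq_0_on_degree_le:
  assumes L: "poly_linear L"
    and b: "\<And>n. degree (b n) = n" "\<And>n. lead_coeff (b n) = 1"
    and zero: "\<And>j. j \<le> D \<Longrightarrow> L (b j) = 0"
    and q: "degree q \<le> D"
  shows "L q = 0"
  using zero q
proof (induction D arbitrary: q)
  case 0
  have "b 0 = 1" using b[of 0] by (metis degree_0_id one_pCons)
  moreover have "q = [:coeff q 0:]" using 0 by (simp add: degree_0_id)
  ultimately have "q = smult (coeff q 0) (b 0)" by simp
  then show ?case using L 0 unfolding poly_linear_def by (metis mult_zero_right order_refl)
next
  case (Suc D)
  define r where "r = q - smult (coeff q (Suc D)) (b (Suc D))"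
  have "degree r \<le> D"
  proof (rule degree_le, intro allI impI)
    fix i assume "D < i"
    then consider "i = Suc D" | "Suc D < i" by linarith
    then show "coeff r i = 0"
      by cases (use Suc.prems b[of "Suc D"] in \<open>auto simp: r_def coeff_eq_0\<close>)
  qed
  then have "L r = 0" using Suc by simp
  moreover have "q = r + smult (coeff q (Suc D)) (b (Suc D))" unfolding r_def by simp
  then have "L q = L r + coeff q (Suc D) * L (b (Suc D))"
    using L unfolding poly_linear_def by metis
  ultimately show ?case using Suc.prems by simp
qed

definition pf_sum :: "(real poly \<Rightarrow> real poly \<Rightarrow> real) \<Rightarrow> nat \<Rightarrow> (nat \<Rightarrow> real poly) \<Rightarrow> real" where
  "pf_sum B N v =
     (\<Sum>\<sigma> | \<sigma> permutes {0..<2*N}. of_int (sign \<sigma>) * (\<Prod>i<N. B (v (\<sigma> (2*i))) (v (\<sigma> (2*i+1)))))"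

lemma pfaffian_Gram: "pfaffian N (\<lambda>i j. B (v i) (v j)) = pf_sum B N v / (2 ^ N * fact N)"
  unfolding pfaffian_def pf_sum_def ..

lemma pf_sum_eq_0_if_repeated:
  assumes kl: "k \<noteq> l" "k < 2*N" "l < 2*N" and eq: "v k = v l"
  shows "pf_sum B N v = 0"
proof -
  define S where "S = {\<sigma>. \<sigma> permutes {0..<2*N}}"
  define \<tau> where "\<tau> = Transposition.transpose k l"
  define F where "F = (\<lambda>\<sigma>. of_int (sign \<sigma>) * (\<Prod>i<N. B (v (\<sigma> (2*i))) (v (\<sigma> (2*i+1)))))"
  have \<tau>: "\<tau> permutes {0..<2*N}" unfolding \<tau>_def using kl by (intro permutes_swap_id) auto
  have v_\<tau>: "v (\<tau> x) = v x" for x unfolding \<tau>_def using eq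
    by (cases "x = k"; cases "x = l") auto
  have F_\<tau>: "F (\<tau> \<circ> \<sigma>) = - F \<sigma>" if "\<sigma> \<in> S" for \<sigma>
  proof -
    have "permutation \<sigma>" using that unfolding S_def by (auto intro: permutes_imp_permutation)
    then have "sign (\<tau> \<circ> \<sigma>) = sign \<tau> * sign \<sigma>"
      by (intro sign_compose) (auto simp: \<tau>_def permutation_swap_id)
    also have "sign \<tau> = -1" unfolding \<tau>_def using kl by (simp add: sign_swap_id)
    finally have "sign (\<tau> \<circ> \<sigma>) = - sign \<sigma>" by (simp add: comp_def)
    then show ?thesis unfolding F_def by (simp add: v_\<tau>)
  qed
  have \<tau>_invol: "\<tau> \<circ> (\<tau> \<circ> \<sigma>) = \<sigma>" "\<tau> \<circ> \<tau> = id" for \<sigma> by (simp_all add: \<tau>_def fun_eq_iff)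
  have "sum F S = sum (\<lambda>\<sigma>. F (\<tau> \<circ> \<sigma>)) S"
    by (rule sum.reindex_bij_witness[where i="\<lambda>\<sigma>. \<tau> \<circ> \<sigma>" and j="\<lambda>\<sigma>. \<tau> \<circ> \<sigma>"])
       (use \<tau> in \<open>auto simp: S_def \<tau>_invol intro: permutes_compose\<close>)
  also have "\<dots> = - sum F S" using F_\<tau> by (simp add: sum_negf)
  finally show ?thesis unfolding pf_sum_def S_def F_def by simp
qed

lemma permutes_pair_containing:
  fixes N k :: nat
  assumes \<sigma>: "\<sigma> permutes {0..<2*N}" and k: "k < 2*N"
  obtains i0 where "i0 < N" "\<sigma> (2*i0) = k \<or> \<sigma> (2*i0+1) = k"
    "\<And>i. i \<noteq> i0 \<Longrightarrow> \<sigma> (2*i) \<noteq> k \<and> \<sigma> (2*i+1) \<noteq> k"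
    "\<sigma> (2*i0) \<noteq> \<sigma> (2*i0+1)"
proof
  define t where "t = inv \<sigma> k"
  have \<sigma>t: "\<sigma> t = k" unfolding t_def using permutes_inverses(1)[OF \<sigma>] .
  have "t < 2*N"
    using permutes_in_image[OF permutes_inv[OF \<sigma>]] k unfolding t_def by fastforce
  then show "t div 2 < N" by simp
  show "\<sigma> (2*(t div 2)) = k \<or> \<sigma> (2*(t div 2)+1) = k"
    using \<sigma>t by (cases "even t") (auto elim!: evenE oddE)
  have inj: "inj \<sigma>" using permutes_inj[OF \<sigma>] .
  show "\<sigma> (2*i) \<noteq> k \<and> \<sigma> (2*i+1) \<noteq> k" if "i \<noteq> t div 2" for i
  proof -
    have "2*i \<noteq> t" "2*i+1 \<noteq> t" using that by auto
    then show ?thesis using inj \<sigma>t unfolding inj_def by metis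
  qed
  show "\<sigma> (2*(t div 2)) \<noteq> \<sigma> (2*(t div 2)+1)" using inj unfolding inj_def by fastforce
qed

lemma pf_sum_linear_slot:
  fixes N k :: nat
  assumes k: "k < 2*N"
    and B: "\<And>X. poly_linear (\<lambda>w. B w X)" "\<And>X. poly_linear (\<lambda>w. B X w)"
  shows "poly_linear (\<lambda>w. pf_sum B N (v(k:=w)))"
  unfolding pf_sum_def
proof (intro poly_linear_sum_fun poly_linear_cmult)
  show "finite {\<sigma>. \<sigma> permutes {0..<2*N}}" by (rule finite_permutations) simp
  fix \<sigma> assume "\<sigma> \<in> {\<sigma>. \<sigma> permutes {0..<2*N}}"
  then obtain i0 where i0: "i0 < N" "\<sigma> (2*i0) = k \<or> \<sigma> (2*i0+1) = k"
    and other: "\<And>i. i \<noteq> i0 \<Longrightarrow> \<sigma> (2*i) \<noteq> k \<and> \<sigma> (2*i+1) \<noteq> k"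
    and distinct: "\<sigma> (2*i0) \<noteq> \<sigma> (2*i0+1)"
    using permutes_pair_containing k by blast
  define P where "P = (\<lambda>w i. B ((v(k:=w)) (\<sigma> (2*i))) ((v(k:=w)) (\<sigma> (2*i+1))))"
  define R where "R = (\<Prod>i\<in>{..<N} - {i0}. B (v (\<sigma> (2*i))) (v (\<sigma> (2*i+1))))"
  have split: "(\<Prod>i<N. P w i) = P w i0 * R" for w
  proof -
    have "(\<Prod>i\<in>{..<N} - {i0}. P w i) = R" unfolding R_def
      by (rule prod.cong) (use other in \<open>auto simp: P_def\<close>)
    then show ?thesis using i0(1) by (simp add: prod.remove[of _ i0])
  qed
  have "poly_linear (\<lambda>w. P w i0)"
  proof (cases "\<sigma> (2*i0) = k")
    case True
    with distinct show ?thesis by (intro poly_linear_cong[OF B(1)]) (simp add: P_def)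
  next
    case False
    with i0(2) show ?thesis by (intro poly_linear_cong[OF B(2)]) (simp add: P_def)
  qed
  then have "poly_linear (\<lambda>w. P w i0 * R)" by (rule poly_linear_mult_const)
  then show "poly_linear (\<lambda>w. \<Prod>i<N. B ((v(k:=w)) (\<sigma> (2*i))) ((v(k:=w)) (\<sigma> (2*i+1))))"
    by (rule poly_linear_cong) (use split in \<open>simp add: P_def\<close>)
qed

lemma pf_sum_eq_0_if_radical_slot:
  fixes N k :: nat
  assumes k: "k < 2*N"
    and radical: "\<And>j. j < 2*N \<Longrightarrow> B w (v j) = 0" "\<And>j. j < 2*N \<Longrightarrow> B (v j) w = 0" "B w w = 0"
  shows "pf_sum B N (v(k:=w)) = 0"
  unfolding pf_sum_def
proof (rule sum.neutral, intro ballI)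
  fix \<sigma> assume "\<sigma> \<in> {\<sigma>. \<sigma> permutes {0..<2*N}}"
  then have \<sigma>: "\<sigma> permutes {0..<2*N}" by simp
  obtain i0 where i0: "i0 < N" "\<sigma> (2*i0) = k \<or> \<sigma> (2*i0+1) = k"
    using permutes_pair_containing[OF \<sigma> k] by blast
  have "\<sigma> j < 2*N" if "j < 2*N" for j using permutes_in_image[OF \<sigma>, of j] that by simp
  then have "\<sigma> (2*i0) < 2*N" "\<sigma> (2*i0+1) < 2*N" using i0(1) by simp_all
  then have "B ((v(k:=w)) (\<sigma> (2*i0))) ((v(k:=w)) (\<sigma> (2*i0+1))) = 0"
    using i0(2) radical by (cases "\<sigma> (2*i0) = k"; cases "\<sigma> (2*i0+1) = k") auto
  then have "(\<Prod>i<N. B ((v(k:=w)) (\<sigma> (2*i))) ((v(k:=w)) (\<sigma> (2*i+1)))) = 0"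
    using i0(1) by (intro prod_zero[OF finite_lessThan] bexI[of _ i0]) simp_all
  then show "of_int (sign \<sigma>) * (\<Prod>i<N. B ((v(k:=w)) (\<sigma> (2*i))) ((v(k:=w)) (\<sigma> (2*i+1)))) = 0"
    by simp
qed

text \<open>A monic vector of degree \<open>k < 2N\<close> in the radical of \<open>B\<close> on polynomials of degree
  \<open>< 2N\<close> may replace the monomial \<open>x\<^sup>k\<close> without changing the Pfaffian, since the lower monomials
  it contains repeat a vector already present.\<close>
lemma pf_sum_monomials_eq_0_if_radical:
  fixes N k :: nat
  assumes k: "k < 2*N"
    and B: "\<And>X. poly_linear (\<lambda>w. B w X)" "\<And>X. poly_linear (\<lambda>w. B X w)"
    and w: "degree w = k" "coeff w k = 1"
    and radical: "\<And>j. j < 2*N \<Longrightarrow> B w (monom 1 j) = 0" "\<And>j. j < 2*N \<Longrightarrow> B (monom 1 j) w = 0"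
      "B w w = 0"
  shows "pf_sum B N (\<lambda>i. monom 1 i) = 0"
proof -
  define v where "v = (\<lambda>i::nat. monom (1::real) i)"
  have w_sum: "w = (\<Sum>i\<le>k. smult (coeff w i) (v i))"
    unfolding v_def using poly_as_sum_of_monoms[of w] w(1) by (simp add: smult_monom)
  have "pf_sum B N (v(k:=w)) = (\<Sum>i\<le>k. coeff w i * pf_sum B N (v(k:=v i)))"
    by (subst w_sum) (rule poly_linear_sum[OF pf_sum_linear_slot[OF k B]], simp)
  also have "\<dots> = (\<Sum>i\<in>{k}. coeff w i * pf_sum B N (v(k:=v i)))"
  proof (rule sum.mono_neutral_right)
    have "pf_sum B N (v(k:=v i)) = 0" if "i < k" for i
      by (rule pf_sum_eq_0_if_repeated[of k i]) (use that k in auto)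
    then show "\<forall>i\<in>{..k} - {k}. coeff w i * pf_sum B N (v(k:=v i)) = 0" by auto
  qed auto
  finally have "pf_sum B N (v(k:=w)) = pf_sum B N v" using w(2) by simp
  moreover have "pf_sum B N (v(k:=w)) = 0"
    using pf_sum_eq_0_if_radical_slot[OF k] radical unfolding v_def by blast
  ultimately show ?thesis unfolding v_def by simp
qed

lemma summable_on_sum:
  fixes f :: "'i \<Rightarrow> 'a \<Rightarrow> 'b::topological_comm_monoid_add"
  shows "finite I \<Longrightarrow> (\<And>i. i \<in> I \<Longrightarrow> f i summable_on A) \<Longrightarrow> (\<lambda>x. \<Sum>i\<in>I. f i x) summable_on A"
  by (induction I rule: finite_induct) (auto intro: summable_on_add)

lemma infsum_diff:
  fixes f g :: "'a \<Rightarrow> 'b::{topological_ab_group_add, t2_space}"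
  assumes "f summable_on A" "g summable_on A"
  shows "(\<Sum>\<^sub>\<infinity>x\<in>A. f x - g x) = infsum f A - infsum g A"
  using infsum_add[OF assms(1), of "\<lambda>x. - g x"] assms(2)
  by (simp add: summable_on_uminus infsum_uminus)

lemma infsum_int_shift: "(\<Sum>\<^sub>\<infinity>x::int. f (x + 1)) = (\<Sum>\<^sub>\<infinity>x::int. f x)"
  and summable_on_int_shift: "(\<lambda>x::int. f (x + 1)) summable_on UNIV \<longleftrightarrow> f summable_on UNIV"
proof -
  have bij: "bij_betw (\<lambda>x::int. x + 1) UNIV UNIV"
    by (rule bij_betwI[where g="\<lambda>x. x - 1"]) auto
  show "(\<Sum>\<^sub>\<infinity>x::int. f (x + 1)) = (\<Sum>\<^sub>\<infinity>x::int. f x)"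
    using infsum_reindex_bij_betw[OF bij] .
  show "(\<lambda>x::int. f (x + 1)) summable_on UNIV \<longleftrightarrow> f summable_on UNIV"
    using summable_on_reindex_bij_betw[OF bij] .
qed

lemma skew_ip_antisym: "skew_ip \<rho> f \<phi> \<psi> = - skew_ip \<rho> f \<psi> \<phi>"
  unfolding skew_ip_def infsum_uminus[symmetric] by (rule infsum_cong) (simp add: algebra_simps)

definition lowering :: "real poly \<Rightarrow> real poly \<Rightarrow> real poly \<Rightarrow> real poly" where
  "lowering f g \<psi> = (f + g) * \<psi> \<circ>\<^sub>p [:1, 1:] - f * \<psi> \<circ>\<^sub>p [:-1, 1:]"

lemma A_low_poly: "A_low f g (poly \<psi>) = poly (lowering f g \<psi>)"
  unfolding A_low_def lowering_def by (simp add: fun_eq_iff poly_pcompose algebra_simps)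

text \<open>The leading terms of \<open>\<psi>(x+1)\<close> and \<open>\<psi>(x-1)\<close> cancel, so the factor \<open>f\<close> of degree two
  raises the degree by one only.\<close>
lemma degree_lowering_le:
  assumes "degree f \<le> 2" "degree g \<le> 1"
  shows "degree (lowering f g \<psi>) \<le> degree \<psi> + 1"
proof -
  define P M where "P = \<psi> \<circ>\<^sub>p [:1, 1:]" and "M = \<psi> \<circ>\<^sub>p [:-1, 1:]"
  have PM: "degree P = degree \<psi>" "degree M = degree \<psi>"
    "coeff P (degree \<psi>) = lead_coeff \<psi>" "coeff M (degree \<psi>) = lead_coeff \<psi>"
    unfolding P_def M_def using lead_coeff_comp[of "[:1, 1:]" \<psi>] lead_coeff_comp[of "[:-1, 1:]" \<psi>]
    by (simp_all add: degree_pcompose)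
  have "degree (P - M) + 1 \<le> degree \<psi> \<or> P - M = 0"
  proof (rule disjCI)
    assume "P - M \<noteq> 0"
    moreover have "coeff (P - M) (degree \<psi>) = 0" using PM by simp
    moreover have "degree (P - M) \<le> degree \<psi>" using PM degree_diff_le by (metis le_refl)
    ultimately show "degree (P - M) + 1 \<le> degree \<psi>"
      by (metis Suc_eq_plus1 leading_coeff_0_iff le_neq_implies_less less_eq_Suc_le)
  qed
  then have "degree (f * (P - M)) \<le> degree \<psi> + 1"
    using degree_mult_le[of f "P - M"] assms(1) by auto
  moreover have "degree (g * P) \<le> degree \<psi> + 1"
    using degree_mult_le[of g P] assms(2) PM by simp
  moreover have "lowering f g \<psi> = g * P + f * (P - M)"
    unfolding lowering_def P_def M_def by (simp add: algebra_simps)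
  ultimately show ?thesis by (metis degree_add_le)
qed

locale int_weight =
  fixes \<rho> :: "int \<Rightarrow> real"
  assumes nonneg: "\<And>x. \<rho> x \<ge> 0"
    and moments: "\<And>k::nat. (\<lambda>x::int. \<bar>real_of_int x\<bar> ^ k * \<rho> x) summable_on UNIV"
begin

definition wsum :: "real poly \<Rightarrow> real" where
  "wsum P = (\<Sum>\<^sub>\<infinity>x::int. poly P (of_int x) * \<rho> x)"

lemma summable_poly_weight: "(\<lambda>x::int. poly P (of_int x) * \<rho> x) summable_on UNIV"
proof -
  have "(\<lambda>x::int. real_of_int x ^ k * \<rho> x) summable_on UNIV" for k
    using moments[of k]
    by (subst summable_on_iff_abs_summable_on_real)
       (simp add: abs_mult power_abs abs_of_nonneg[OF nonneg])
  then have "(\<lambda>x. \<Sum>i\<le>degree P. coeff P i * (real_of_int x ^ i * \<rho> x)) summable_on UNIV"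
    by (intro summable_on_sum summable_on_cmult_right) auto
  then show ?thesis by (simp add: poly_altdef sum_distrib_right mult.assoc)
qed

lemma wsum_diff: "wsum (P - R) = wsum P - wsum R"
  unfolding wsum_def by (simp add: left_diff_distrib infsum_diff summable_poly_weight)

lemma wsum_add: "wsum (P + R) = wsum P + wsum R"
  unfolding wsum_def by (simp add: distrib_right infsum_add summable_poly_weight)

lemma wsum_smult: "wsum (smult a P) = a * wsum P"
  unfolding wsum_def by (simp add: mult.assoc infsum_cmult_right summable_poly_weight)

lemma poly_linear_wsum_mult: "poly_linear (\<lambda>q. wsum (q * R))"
  unfolding poly_linear_def by (simp add: distrib_right wsum_add wsum_smult)

end

locale pearson_weight = int_weight +
  fixes f g :: "real poly"
  assumes pearson: "\<And>x::int. poly f (of_int x + 1) * \<rho> (x + 1) - poly f (of_int x) * \<rho> x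
                            = poly g (of_int x) * \<rho> x"
begin

text \<open>Summation by parts: the term containing \<open>\<phi>(x+1)\<close> is shifted back to \<open>x\<close>.\<close>
lemma skew_ip_eq_wsum_lowering: "skew_ip \<rho> f \<phi> \<psi> = wsum (\<phi> * lowering f g \<psi>)"
proof -
  define T where "T = (\<lambda>x::int. poly (\<phi> * \<psi> \<circ>\<^sub>p [:1, 1:] * (f + g)) (of_int x) * \<rho> x)"
  define U where "U = (\<lambda>x::int. poly (\<phi> * \<psi> \<circ>\<^sub>p [:-1, 1:] * f) (of_int x) * \<rho> x)"
  have "(poly \<phi> (of_int x) * poly \<psi> (of_int x + 1) - poly \<phi> (of_int x + 1) * poly \<psi> (of_int x))
          * (poly f (of_int x + 1) * \<rho> (x + 1)) = T x - U (x + 1)" for x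
  proof -
    have \<omega>: "(poly f (of_int x) + poly g (of_int x)) * \<rho> x = poly f (of_int x + 1) * \<rho> (x + 1)"
      using pearson[of x] by (simp add: algebra_simps)
    have "T x = poly \<phi> (of_int x) * poly \<psi> (of_int x + 1)
                  * ((poly f (of_int x) + poly g (of_int x)) * \<rho> x)"
      unfolding T_def by (simp add: poly_pcompose algebra_simps)
    moreover have "U (x + 1) = poly \<phi> (of_int x + 1) * poly \<psi> (of_int x)
                                 * (poly f (of_int x + 1) * \<rho> (x + 1))"
      unfolding U_def by (simp add: poly_pcompose algebra_simps)
    ultimately show ?thesis by (simp only: \<omega>) (simp add: algebra_simps)
  qed
  then have "skew_ip \<rho> f \<phi> \<psi> = (\<Sum>\<^sub>\<infinity>x::int. T x - U (x + 1))"
    unfolding skew_ip_def by simp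
  also have "\<dots> = infsum T UNIV - infsum U UNIV"
  proof -
    have "T summable_on UNIV" "U summable_on UNIV"
      unfolding T_def U_def by (rule summable_poly_weight)+
    then show ?thesis by (simp add: infsum_diff summable_on_int_shift infsum_int_shift)
  qed
  also have "\<dots> = wsum (\<phi> * lowering f g \<psi>)"
    unfolding T_def U_def wsum_def[symmetric] wsum_diff[symmetric] lowering_def
    by (simp add: algebra_simps)
  finally show ?thesis .
qed

lemma poly_linear_skew_ip_left: "poly_linear (\<lambda>w. skew_ip \<rho> f w X)"
  unfolding skew_ip_eq_wsum_lowering by (rule poly_linear_wsum_mult)

lemma poly_linear_skew_ip_right: "poly_linear (\<lambda>w. skew_ip \<rho> f X w)"
  using poly_linear_cmult[OF poly_linear_skew_ip_left, of "-1"]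
  by (rule poly_linear_cong) (simp add: skew_ip_antisym[of \<rho> f X])

lemma c_coef_eq_skew_ip: "c_coef \<rho> f g p n = skew_ip \<rho> f (p n) (p (Suc n))"
proof -
  have "c_coef \<rho> f g p n = - skew_ip \<rho> f (p (Suc n)) (p n)"
    unfolding c_coef_def skew_ip_eq_wsum_lowering wsum_def by (simp add: A_low_poly)
  then show ?thesis using skew_ip_antisym[of \<rho> f "p n"] by simp
qed

end

locale pearson_orthogonal_basis = pearson_weight +
  fixes p :: "nat \<Rightarrow> real poly"
  assumes deg_f: "degree f \<le> 2" and deg_g: "degree g \<le> 1"
    and p_monic: "\<And>n. lead_coeff (p n) = 1"
    and p_degree: "\<And>n. degree (p n) = n"
    and p_orthogonal: "\<And>m n. m \<noteq> n \<Longrightarrow> wsum (p m * p n) = 0"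
begin

lemma coeff_basis_self [simp]: "coeff (p n) n = 1"
  using p_monic[of n] by (simp add: p_degree)

abbreviation c :: "nat \<Rightarrow> real" where "c \<equiv> c_coef \<rho> f g p"
abbreviation Q :: "nat \<Rightarrow> real poly" where "Q \<equiv> Q_skew p c"
abbreviation qcoef :: "nat \<Rightarrow> nat \<Rightarrow> real" where "qcoef n l \<equiv> \<Prod>j\<in>{l..<n}. c (2*j+1) / c (2*j)"

lemma wsum_mult_basis_eq_0: "degree q < k \<Longrightarrow> wsum (q * p k) = 0"
  by (rule poly_linear_eq_0_on_degree_le[OF poly_linear_wsum_mult p_degree p_monic, of "k - 1"])
     (auto intro: p_orthogonal)

lemma skew_ip_basis:
  "skew_ip \<rho> f (p i) (p j) = (if j = Suc i then c i else if i = Suc j then - c j else 0)"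
proof -
  have far: "skew_ip \<rho> f (p i) (p j) = 0" if "Suc j < i" for i j
    using wsum_mult_basis_eq_0[of "lowering f g (p j)" i] degree_lowering_le[OF deg_f deg_g, of "p j"]
      that p_degree[of j] by (simp add: skew_ip_eq_wsum_lowering mult.commute)
  consider "j = Suc i" | "i = Suc j" | "i = j" | "Suc j < i" | "Suc i < j" by linarith
  then show ?thesis
  proof cases
    case 1
    then show ?thesis by (simp add: c_coef_eq_skew_ip)
  next
    case 2
    then show ?thesis using skew_ip_antisym[of \<rho> f "p i"] by (simp add: c_coef_eq_skew_ip)
  next
    case 3
    then show ?thesis using skew_ip_antisym[of \<rho> f "p i" "p i"] by simp
  next
    case 4
    then show ?thesis by (simp add: far)
  next
    case 5
    then show ?thesis using far[where i = j and j = i] skew_ip_antisym[of \<rho> f "p i"] by simp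
  qed
qed

lemma skew_ip_basis_even_even: "skew_ip \<rho> f (p (2*i)) (p (2*j)) = 0"
proof -
  have "2*j \<noteq> Suc (2*i)" "2*i \<noteq> Suc (2*j)" by presburger+
  then show ?thesis by (simp add: skew_ip_basis)
qed

lemma skew_ip_basis_odd_odd: "skew_ip \<rho> f (p (2*i+1)) (p (2*j+1)) = 0"
proof -
  have "2*j+1 \<noteq> Suc (2*i+1)" "2*i+1 \<noteq> Suc (2*j+1)" by presburger+
  then show ?thesis by (simp add: skew_ip_basis)
qed

lemma Q_skew_odd [simp]: "Q (Suc (2*m)) = p (Suc (2*m))"
  by (simp add: Q_skew_def)

lemma Q_skew_even: "Q (2*n) = (\<Sum>l\<in>{0..n}. smult (qcoef n l) (p (2*l)))"
  by (simp add: Q_skew_def)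

lemma Q_skew_monic_degree: "lead_coeff (Q k) = 1 \<and> degree (Q k) = k"
proof (cases "even k")
  case True
  then obtain n where k: "k = 2*n" by blast
  define R where "R = (\<Sum>l<n. smult (qcoef n l) (p (2*l)))"
  have Q: "Q (2*n) = R + p (2*n)"
    unfolding Q_skew_even R_def by (simp add: atLeast0AtMost lessThan_Suc_atMost[symmetric])
  have "degree R < 2*n" if "n > 0"
    unfolding R_def using that
    by (intro degree_sum_less) (auto intro: le_less_trans[OF degree_smult_le] simp: p_degree)
  then have "degree R < degree (p (2*n)) \<or> R = 0"
    by (cases "n = 0") (auto simp: R_def p_degree)
  then have "lead_coeff (R + p (2*n)) = 1 \<and> degree (R + p (2*n)) = 2*n"
  proof
    assume lt: "degree R < degree (p (2*n))"
    have "degree (R + p (2*n)) = degree (p (2*n))" by (rule degree_add_eq_right[OF lt])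
    moreover have "lead_coeff (R + p (2*n)) = lead_coeff (p (2*n))" by (rule lead_coeff_add_le[OF lt])
    ultimately show ?thesis using p_monic p_degree by simp
  qed (simp add: p_degree)
  then show ?thesis unfolding k Q .
next
  case False
  then obtain n where "k = 2*n+1" by (blast elim: oddE)
  then show ?thesis using p_monic p_degree by (simp add: Q_skew_def)
qed

lemma skew_ip_Q_even_basis_even: "skew_ip \<rho> f (Q (2*n)) (p (2*i)) = 0"
  unfolding Q_skew_even poly_linear_sum[OF poly_linear_skew_ip_left finite_atLeastAtMost]
  by (simp add: skew_ip_basis_even_even)

lemma skew_ip_Q_even_Q_even: "skew_ip \<rho> f (Q (2*m)) (Q (2*n)) = 0"
  unfolding Q_skew_even[of n] poly_linear_sum[OF poly_linear_skew_ip_right finite_atLeastAtMost]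
  by (simp add: skew_ip_Q_even_basis_even)

lemma skew_ip_Q_even_basis_odd:
  assumes "\<And>j. j < n \<Longrightarrow> c (2*j) \<noteq> 0"
  shows "skew_ip \<rho> f (Q (2*n)) (p (2*m+1)) = (if m = n then c (2*n) else 0)"
proof -
  have parity: "2*m+1 = Suc (2*l) \<longleftrightarrow> l = m" "2*l = Suc (2*m+1) \<longleftrightarrow> l = Suc m" for l
    by presburger+
  have "skew_ip \<rho> f (Q (2*n)) (p (2*m+1))
      = (\<Sum>l\<in>{0..n}. qcoef n l * skew_ip \<rho> f (p (2*l)) (p (2*m+1)))"
    unfolding Q_skew_even by (rule poly_linear_sum[OF poly_linear_skew_ip_left]) simp
  also have "\<dots> = (\<Sum>l\<in>{0..n}. (if l = m then qcoef n m * c (2*m) else 0)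
                              - (if l = Suc m then qcoef n (Suc m) * c (2*m+1) else 0))"
    by (rule sum.cong) (auto simp: skew_ip_basis parity)
  also have "\<dots> = (if m \<le> n then qcoef n m * c (2*m) else 0)
                 - (if Suc m \<le> n then qcoef n (Suc m) * c (2*m+1) else 0)"
    by (simp only: sum_subtractf sum.delta finite_atLeastAtMost) simp
  also have "\<dots> = (if m = n then c (2*n) else 0)"
  proof (cases "m < n")
    case True
    then have "qcoef n m = c (2*m+1) / c (2*m) * qcoef n (Suc m)"
      by (simp add: prod.atLeast_Suc_lessThan)
    with True assms[of m] show ?thesis by simp
  qed auto
  finally show ?thesis .
qed

lemma c_even_nonzero:
  assumes "\<And>N. N \<ge> 1 \<Longrightarrow> pfaffian N (\<lambda>i j. skew_ip \<rho> f (monom 1 i) (monom 1 j)) \<noteq> 0"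
  shows "c (2*m) \<noteq> 0"
proof (induction m rule: less_induct)
  case (less m)
  show ?case
  proof
    assume c0: "c (2*m) = 0"
    have "skew_ip \<rho> f (Q (2*m)) (p j) = 0" for j
    proof (cases "even j")
      case False
      then obtain i where "j = 2*i+1" by (blast elim: oddE)
      then show ?thesis using skew_ip_Q_even_basis_odd[of m i] less.IH c0 by simp
    qed (auto simp: skew_ip_Q_even_basis_even)
    then have radical: "skew_ip \<rho> f (Q (2*m)) q = 0" for q
      by (rule poly_linear_eq_0_on_degree_le[OF poly_linear_skew_ip_right p_degree p_monic,
            where D = "degree q"]) simp_all
    have "pf_sum (skew_ip \<rho> f) (Suc m) (\<lambda>i. monom 1 i) = 0"
    proof (rule pf_sum_monomials_eq_0_if_radical[of "2*m"])
      show "skew_ip \<rho> f q (Q (2*m)) = 0" for q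
        using radical skew_ip_antisym[of \<rho> f q] by simp
      show "coeff (Q (2*m)) (2*m) = 1"
        using conjunct2[OF Q_skew_monic_degree] conjunct1[OF Q_skew_monic_degree] by (simp only:)
    qed (simp_all add: radical Q_skew_monic_degree poly_linear_skew_ip_left poly_linear_skew_ip_right)
    then show False
      using assms[of "Suc m"] pfaffian_Gram[of "Suc m" "skew_ip \<rho> f" "\<lambda>i. monom 1 i"] by simp
  qed
qed

end

theorem proposition3p9:
  fixes \<rho> :: "int \<Rightarrow> real" and f g :: "real poly"
    and p :: "nat \<Rightarrow> real poly" and h :: "nat \<Rightarrow> real"
  assumes rho_nonneg: "\<And>x. \<rho> x \<ge> 0"
    and moments: "\<And>k::nat. (\<lambda>x::int. \<bar>real_of_int x\<bar> ^ k * \<rho> x) summable_on UNIV"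
    and deg_f: "degree f \<le> 2" and deg_g: "degree g \<le> 1"
    and pearson: "\<And>x::int. poly f (of_int x + 1) * \<rho> (x + 1) - poly f (of_int x) * \<rho> x
                            = poly g (of_int x) * \<rho> x"
    and bdry_low: "\<And>a::int. \<rho> a \<noteq> 0 \<Longrightarrow> (\<forall>x<a. \<rho> x = 0) \<Longrightarrow> poly f (of_int a) * \<rho> a = 0"
    and bdry_up: "\<And>b::int. \<rho> b \<noteq> 0 \<Longrightarrow> (\<forall>x>b. \<rho> x = 0) \<Longrightarrow> poly f (of_int b) * \<rho> b = 0"
    and bdry_top: "(\<lambda>n::nat. poly f (real n) * \<rho> (int n)) \<longlonglongrightarrow> 0"
    and bdry_bot: "(\<lambda>n::nat. poly f (- real n) * \<rho> (- int n)) \<longlonglongrightarrow> 0"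
    and p_monic: "\<And>n. lead_coeff (p n) = 1"
    and p_deg: "\<And>n. degree (p n) = n"
    and p_orth: "\<And>m n. (\<Sum>\<^sub>\<infinity>x::int. poly (p m) (of_int x) * poly (p n) (of_int x) * \<rho> x)
                         = (if n = m then h n else 0)"
    and h_pos: "\<And>n. h n > 0"
    and pf_nonzero: "\<And>n. n \<ge> 1 \<Longrightarrow>
          pfaffian n (\<lambda>i j. skew_ip \<rho> f (monom 1 i) (monom 1 j)) \<noteq> 0"
  shows "(\<forall>k. lead_coeff (Q_skew p (c_coef \<rho> f g p) k) = 1
              \<and> degree (Q_skew p (c_coef \<rho> f g p) k) = k)
       \<and> (\<forall>n m. skew_ip \<rho> f (Q_skew p (c_coef \<rho> f g p) (2*n)) (Q_skew p (c_coef \<rho> f g p) (2*m+1))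
                  = (if n = m then c_coef \<rho> f g p (2*n) else 0)
              \<and> skew_ip \<rho> f (Q_skew p (c_coef \<rho> f g p) (2*m+1)) (Q_skew p (c_coef \<rho> f g p) (2*n))
                  = - (if n = m then c_coef \<rho> f g p (2*n) else 0)
              \<and> skew_ip \<rho> f (Q_skew p (c_coef \<rho> f g p) (2*m)) (Q_skew p (c_coef \<rho> f g p) (2*n)) = 0
              \<and> skew_ip \<rho> f (Q_skew p (c_coef \<rho> f g p) (2*m+1)) (Q_skew p (c_coef \<rho> f g p) (2*n+1)) = 0)"
proof -
  interpret int_weight \<rho> by unfold_locales (fact rho_nonneg moments)+
  interpret pearson_orthogonal_basis \<rho> f g p
  proof unfold_locales
    show "wsum (p m * p n) = 0" if "m \<noteq> n" for m n
      using p_orth[of m n] that by (simp add: wsum_def)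
  qed (fact assms)+
  have c_even: "c (2*n) \<noteq> 0" for n
    using c_even_nonzero[OF pf_nonzero] .
  have even_odd: "skew_ip \<rho> f (Q (2*n)) (Q (2*m+1)) = (if n = m then c (2*n) else 0)" for n m
    using skew_ip_Q_even_basis_odd[of n m] c_even by simp
  have odd_even: "skew_ip \<rho> f (Q (2*m+1)) (Q (2*n)) = - (if n = m then c (2*n) else 0)" for n m
    using skew_ip_antisym[of \<rho> f "Q (2*m+1)"] even_odd[of n m] by simp
  have odd_odd: "skew_ip \<rho> f (Q (2*m+1)) (Q (2*n+1)) = 0" for n m
    using skew_ip_basis_odd_odd[of m n] by simp
  show ?thesis
    using Q_skew_monic_degree even_odd odd_even skew_ip_Q_even_Q_even odd_odd by blast
qed

end
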